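(* Let $G=(V,E,\ell,\Phi)$ be a weak model that is strongly connected and trackable. Then $n_G(t)=O(1)$, i.e. there is a constant $C$ such that $n_G(t)\le C$ for all $t\ge 1$.
   Context: A (single-colored) weak model $G=(V,E,\ell,\Phi)$ consists of a finite set of nodes $V$, a set of directed edges $E\subseteq V\times V$, a finite set of colors $\Phi$, and a coloring $\ell:V\to\Phi$. A walk of length $t$ is a sequence $(x_1,\dots,x_t)$ of nodes with $(x_i,x_{i+1})\in E$ for all $1\le i<t$. For a color sequence $Y_{[t]}=(Y_1,\dots,Y_t)\in\Phi^t$, a hypothesis is a walk $(x_1,\dots,x_t)$ with $\ell(x_i)=Y_i$ for all $i$; $\mathcal H_G(Y_{[t]})$ denotes the set of hypotheses. Define $n_G(t)=\max_{Y_{[t]}\in\Phi^t}|\mathcal H_G(Y_{[t]})|$. The model is trackable if $n_G(t)=O(t^k)$ for some $k\ge 0$. It is strongly connected if for every ordered pair of nodes $u,w$ there is a directed path from $u$ to $w$. *)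

theory Defs
  imports Main "HOL-Library.Landau_Symbols"
begin

definition weak_model :: "'v set \<Rightarrow> ('v \<times> 'v) set \<Rightarrow> ('v \<Rightarrow> 'c) \<Rightarrow> 'c set \<Rightarrow> bool" where
  "weak_model V E ell Phi \<longleftrightarrow> finite V \<and> E \<subseteq> V \<times> V \<and> finite Phi \<and> ell ` V \<subseteq> Phi"

definition is_walk :: "'v set \<Rightarrow> ('v \<times> 'v) set \<Rightarrow> 'v list \<Rightarrow> bool" where
  "is_walk V E xs \<longleftrightarrow> set xs \<subseteq> V \<and> (\<forall>i. Suc i < length xs \<longrightarrow> (xs ! i, xs ! Suc i) \<in> E)"

definition hypotheses :: "'v set \<Rightarrow> ('v \<times> 'v) set \<Rightarrow> ('v \<Rightarrow> 'c) \<Rightarrow> 'c list \<Rightarrow> 'v list set" where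
  "hypotheses V E ell Y = {xs. is_walk V E xs \<and> length xs = length Y \<and> map ell xs = Y}"

text \<open>n_G(t) = max over Y in Phi^t of |H_G(Y)| (the insert 0 only guards the degenerate empty case).\<close>
definition n_G :: "'v set \<Rightarrow> ('v \<times> 'v) set \<Rightarrow> ('v \<Rightarrow> 'c) \<Rightarrow> 'c set \<Rightarrow> nat \<Rightarrow> nat" where
  "n_G V E ell Phi t = Max (insert 0 ((\<lambda>Y. card (hypotheses V E ell Y)) ` {Y. set Y \<subseteq> Phi \<and> length Y = t}))"

definition trackable :: "'v set \<Rightarrow> ('v \<times> 'v) set \<Rightarrow> ('v \<Rightarrow> 'c) \<Rightarrow> 'c set \<Rightarrow> bool" where
  "trackable V E ell Phi \<longleftrightarrow> (\<exists>k::nat. (\<lambda>t. real (n_G V E ell Phi t)) \<in> O(\<lambda>t. real t ^ k))"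

definition strongly_connected :: "'v set \<Rightarrow> ('v \<times> 'v) set \<Rightarrow> bool" where
  "strongly_connected V E \<longleftrightarrow> (\<forall>u\<in>V. \<forall>w\<in>V. (u, w) \<in> E\<^sup>*)"

end

theory Submission
  imports Defs "HOL-Real_Asymp.Real_Asymp"
begin

text \<open>Two distinct closed walks at a node u with the same length and colour sequence can be
  concatenated in any order; the resulting 2^m walks all carry the same colour sequence, so
  n_G grows exponentially along an arithmetic progression and the model is not trackable.
  Hence in a trackable model such a pair does not exist.  In a strongly connected model,
  two hypotheses for the same colour sequence with the same first and last node can both be
  closed up by one return path into such a pair, so a hypothesis is determined by its
  endpoints and n_G(t) \<le> |V|^2.\<close>

lemma is_walk_singleton [simp]: "is_walk V E [x] \<longleftrightarrow> x \<in> V"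
  by (simp add: is_walk_def)

lemma is_walk_Cons_Cons [simp]:
  "is_walk V E (x # y # xs) \<longleftrightarrow> x \<in> V \<and> (x, y) \<in> E \<and> is_walk V E (y # xs)"
  unfolding is_walk_def by (auto simp: less_Suc_eq_0_disj)

lemma is_walk_append:
  assumes "is_walk V E xs" "xs \<noteq> []" "is_walk V E (last xs # ys)"
  shows "is_walk V E (xs @ ys)"
  using assms by (induction xs rule: induct_list012) auto

lemma rtrancl_imp_walk:
  assumes "(v, u) \<in> E\<^sup>*" "v \<in> V" "E \<subseteq> V \<times> V"
  shows "\<exists>p. is_walk V E p \<and> p \<noteq> [] \<and> hd p = v \<and> last p = u"
  using assms
proof (induction rule: converse_rtrancl_induct)
  case base
  then show ?case by (intro exI[of _ "[u]"]) simp
next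
  case (step y z)
  then obtain p where p: "is_walk V E p" "p \<noteq> []" "hd p = z" "last p = u"
    by blast
  then have "p = z # tl p" by (cases p) auto
  with p step.hyps(1) step.prems have "is_walk V E (y # p)"
    by (metis is_walk_Cons_Cons)
  with p show ?case by (intro exI[of _ "y # p"]) auto
qed

definition closed_walk :: "'v set \<Rightarrow> ('v \<times> 'v) set \<Rightarrow> 'v \<Rightarrow> 'v list \<Rightarrow> bool" where
  "closed_walk V E u xs \<longleftrightarrow> is_walk V E xs \<and> xs \<noteq> [] \<and> hd xs = u \<and> last xs = u"

lemma closed_walk_append_return:
  assumes "is_walk V E xs" "xs \<noteq> []"
    and "is_walk V E p" "p \<noteq> []" "hd p = last xs" "last p = hd xs"
  shows "closed_walk V E (hd xs) (xs @ tl p)"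
proof -
  have p: "p = last xs # tl p" using assms(4,5) by (cases p) auto
  have "is_walk V E (xs @ tl p)"
    using is_walk_append[OF assms(1,2)] assms(3) p by metis
  moreover have "last (xs @ tl p) = last (last xs # tl p)"
    by (simp add: last_append)
  then have "last (xs @ tl p) = hd xs"
    using assms(6) p by simp
  ultimately show ?thesis
    using assms(2) by (simp add: closed_walk_def)
qed

lemma hypotheses_finite:
  assumes "weak_model V E ell Phi"
  shows "finite (hypotheses V E ell Y)"
proof (rule finite_subset)
  show "hypotheses V E ell Y \<subseteq> {xs. set xs \<subseteq> V \<and> length xs = length Y}"
    unfolding hypotheses_def is_walk_def by blast
  show "finite {xs. set xs \<subseteq> V \<and> length xs = length Y}"
    using assms by (simp add: weak_model_def finite_lists_length_eq)
qed

lemma card_hypotheses_le_n_G: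
  assumes "weak_model V E ell Phi" "set Y \<subseteq> Phi"
  shows "card (hypotheses V E ell Y) \<le> n_G V E ell Phi (length Y)"
  unfolding n_G_def
proof (rule Max_ge)
  show "finite (insert 0 ((\<lambda>Z. card (hypotheses V E ell Z)) `
      {Z. set Z \<subseteq> Phi \<and> length Z = length Y}))"
    using assms(1) by (simp add: weak_model_def finite_lists_length_eq)
qed (use assms(2) in blast)

lemma concat_map_inj:
  assumes "inj f" "\<And>x. length (f x) = L"
    and "length s1 = length s2" "concat (map f s1) = concat (map f s2)"
  shows "s1 = s2"
  using assms(3,4)
proof (induction s1 arbitrary: s2)
  case Nil
  then show ?case by simp
next
  case (Cons x s1)
  then obtain y s2' where s2: "s2 = y # s2'" by (cases s2) auto
  with Cons.prems have "f x @ concat (map f s1) = f y @ concat (map f s2')"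
    by simp
  then have "f x = f y" "concat (map f s1) = concat (map f s2')"
    using append_eq_append_conv[of "f x" "f y"] assms(2) by simp_all
  moreover have "length s1 = length s2'"
    using Cons.prems(1) s2 by simp
  ultimately show ?case
    using Cons.IH s2 injD[OF assms(1)] by blast
qed

lemma n_G_exponential_lower_bound:
  assumes wm: "weak_model V E ell Phi"
    and a: "closed_walk V E u a" and b: "closed_walk V E u b"
    and ab: "length a = length b" "map ell a = map ell b" "a \<noteq> b"
  shows "2 ^ m \<le> n_G V E ell Phi (1 + m * (length a - 1))"
proof -
  define f where "f = (\<lambda>x::bool. if x then tl a else tl b)"
  define W where "W = (\<lambda>s. u # concat (map f s))"
  define Y where "Y = ell u # concat (replicate m (map ell (tl a)))"
  define S where "S = {s::bool list. set s \<subseteq> UNIV \<and> length s = m}"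
  have aa: "u # tl a = a" and bb: "u # tl b = b"
    using a b unfolding closed_walk_def by (metis list.collapse)+
  have f_closed: "closed_walk V E u (u # f x)" for x
    using a b aa bb unfolding f_def by (cases x) simp_all
  have f_length: "length (f x) = length a - 1" for x
    using ab unfolding f_def by simp
  have "inj f"
    using aa bb ab(3) unfolding f_def by (intro injI) (auto split: if_splits)
  have W_walk: "is_walk V E (W s)" for s
  proof (induction s)
    case Nil
    then show ?case using f_closed[of True] by (simp add: W_def closed_walk_def is_walk_def)
  next
    case (Cons x s)
    have "is_walk V E ((u # f x) @ concat (map f s))"
      using f_closed[of x] Cons.IH by (intro is_walk_append) (simp_all add: W_def closed_walk_def)
    then show ?case by (simp add: W_def)
  qed
  have W_colours: "map ell (W s) = Y" if "length s = m" for s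
  proof -
    have "map ell (f x) = map ell (tl a)" for x
      using ab unfolding f_def by (simp add: map_tl)
    then show ?thesis
      using that by (simp add: W_def Y_def map_concat comp_def map_replicate_const)
  qed
  have Y_colours: "set Y \<subseteq> Phi"
  proof -
    have "set a \<subseteq> V" using a by (simp add: closed_walk_def is_walk_def)
    then have "ell ` set a \<subseteq> Phi" using wm by (auto simp: weak_model_def)
    moreover have "set Y \<subseteq> ell ` set a"
      using a unfolding Y_def closed_walk_def by (auto dest: list.set_sel(2))
    ultimately show ?thesis by blast
  qed
  have "inj_on W S"
    using concat_map_inj[OF \<open>inj f\<close> f_length] by (intro inj_onI) (auto simp: W_def S_def)
  moreover have "W ` S \<subseteq> hypotheses V E ell Y"
    unfolding hypotheses_def S_def using W_walk W_colours by (auto, metis length_map)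
  ultimately have "card S \<le> card (hypotheses V E ell Y)"
    using hypotheses_finite[OF wm] by (metis card_image card_mono)
  then have "2 ^ m \<le> card (hypotheses V E ell Y)"
    using card_lists_length_eq[of "UNIV::bool set" m] by (simp add: S_def card_UNIV_bool)
  also have "\<dots> \<le> n_G V E ell Phi (length Y)"
    using card_hypotheses_le_n_G[OF wm Y_colours] .
  also have "length Y = 1 + m * (length a - 1)"
    by (simp add: Y_def length_concat sum_list_replicate)
  finally show ?thesis .
qed

lemma not_polynomially_bounded_if_exponential:
  fixes f :: "nat \<Rightarrow> nat"
  assumes "(\<lambda>t. real (f t)) \<in> O(\<lambda>t. real t ^ k)" "L > 0" "\<And>m. 2 ^ m \<le> f (1 + m * L)"
  shows False
proof -
  obtain c where "c > 0" and "eventually (\<lambda>t. norm (real (f t)) \<le> c * norm (real t ^ k)) at_top"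
    using assms(1) by (elim landau_o.bigE)
  then obtain N where N: "\<And>t. t \<ge> N \<Longrightarrow> real (f t) \<le> c * real t ^ k"
    unfolding eventually_at_top_linorder by auto
  have "eventually (\<lambda>m::nat. c * (1 + real m * real L) ^ k < 2 ^ m) at_top"
    using \<open>c > 0\<close> \<open>L > 0\<close> by real_asymp
  then obtain M where M: "\<And>m. m \<ge> M \<Longrightarrow> c * (1 + real m * real L) ^ k < 2 ^ m"
    unfolding eventually_at_top_linorder by auto
  define m where "m = max M N"
  have "N \<le> m"
    by (simp add: m_def)
  moreover have "m \<le> m * L"
    using \<open>L > 0\<close> by (cases L) simp_all
  ultimately have "N \<le> 1 + m * L"
    by linarith
  then have "real (f (1 + m * L)) \<le> c * (1 + real m * real L) ^ k"
    using N by fastforce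
  also have "\<dots> < 2 ^ m"
    using M by (simp add: m_def)
  also have "\<dots> \<le> real (f (1 + m * L))"
    using assms(3)[of m] by (metis of_nat_le_iff of_nat_numeral of_nat_power)
  finally show False by simp
qed

lemma trackable_closed_walks_unique:
  assumes wm: "weak_model V E ell Phi" and tr: "trackable V E ell Phi"
    and a: "closed_walk V E u a" and b: "closed_walk V E u b"
    and ab: "length a = length b" "map ell a = map ell b"
  shows "a = b"
proof (rule ccontr)
  assume "a \<noteq> b"
  have "length a - 1 > 0"
  proof (rule ccontr)
    assume "\<not> length a - 1 > 0"
    with a b ab have "a = [u]" "b = [u]"
      unfolding closed_walk_def by (cases a; cases b; auto)+
    with \<open>a \<noteq> b\<close> show False by simp
  qed
  moreover obtain k where "(\<lambda>t. real (n_G V E ell Phi t)) \<in> O(\<lambda>t. real t ^ k)"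
    using tr unfolding trackable_def by blast
  ultimately show False
    using n_G_exponential_lower_bound[OF wm a b ab \<open>a \<noteq> b\<close>]
    by (intro not_polynomially_bounded_if_exponential)
qed

lemma hypotheses_determined_by_endpoints:
  assumes wm: "weak_model V E ell Phi" and sc: "strongly_connected V E"
    and tr: "trackable V E ell Phi"
  shows "inj_on (\<lambda>xs. (hd xs, last xs)) (hypotheses V E ell Y)"
proof (rule inj_onI)
  fix xs ys
  assume xs: "xs \<in> hypotheses V E ell Y" and ys: "ys \<in> hypotheses V E ell Y"
    and ends: "(hd xs, last xs) = (hd ys, last ys)"
  show "xs = ys"
  proof (cases "Y = []")
    case True
    then show ?thesis using xs ys by (simp add: hypotheses_def)
  next
    case False
    then have walks: "is_walk V E xs" "xs \<noteq> []" "is_walk V E ys" "ys \<noteq> []"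
      using xs ys by (auto simp: hypotheses_def)
    then have "hd xs \<in> V" "last xs \<in> V"
      by (auto simp: is_walk_def)
    moreover have "E \<subseteq> V \<times> V"
      using wm by (simp add: weak_model_def)
    ultimately obtain p where p: "is_walk V E p" "p \<noteq> []" "hd p = last xs" "last p = hd xs"
      using sc rtrancl_imp_walk unfolding strongly_connected_def by metis
    have "closed_walk V E (hd xs) (xs @ tl p)"
      using closed_walk_append_return[OF walks(1,2) p] .
    moreover have "closed_walk V E (hd xs) (ys @ tl p)"
      using closed_walk_append_return[OF walks(3,4) p(1,2)] p(3,4) ends by simp
    moreover have "length (xs @ tl p) = length (ys @ tl p)"
      and "map ell (xs @ tl p) = map ell (ys @ tl p)"
      using xs ys by (simp_all add: hypotheses_def)
    ultimately have "xs @ tl p = ys @ tl p"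
      by (rule trackable_closed_walks_unique[OF wm tr])
    then show ?thesis by simp
  qed
qed

lemma card_hypotheses_le_card_squared:
  assumes "weak_model V E ell Phi" "strongly_connected V E" "trackable V E ell Phi" "Y \<noteq> []"
  shows "card (hypotheses V E ell Y) \<le> card V * card V"
proof -
  have "(\<lambda>xs. (hd xs, last xs)) ` hypotheses V E ell Y \<subseteq> V \<times> V"
  proof (rule image_subsetI)
    fix xs assume "xs \<in> hypotheses V E ell Y"
    then have "set xs \<subseteq> V" "xs \<noteq> []"
      using assms(4) by (auto simp: hypotheses_def is_walk_def)
    then show "(hd xs, last xs) \<in> V \<times> V" by auto
  qed
  moreover have "finite V"
    using assms(1) by (simp add: weak_model_def)
  ultimately have "card (hypotheses V E ell Y) \<le> card (V \<times> V)"
    using hypotheses_determined_by_endpoints[OF assms(1-3)] by (intro card_inj_on_le) auto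
  then show ?thesis by (simp add: card_cartesian_product)
qed

theorem theorem1:
  fixes V :: "'v set" and E :: "('v \<times> 'v) set" and ell :: "'v \<Rightarrow> 'c" and Phi :: "'c set"
  assumes "weak_model V E ell Phi"
    and "strongly_connected V E"
    and "trackable V E ell Phi"
  shows "\<exists>C::nat. \<forall>t\<ge>1. n_G V E ell Phi t \<le> C"
proof (intro exI allI impI)
  fix t :: nat
  assume "t \<ge> 1"
  then have "card (hypotheses V E ell Y) \<le> card V * card V" if "length Y = t" for Y
    using that by (intro card_hypotheses_le_card_squared[OF assms]) auto
  then show "n_G V E ell Phi t \<le> card V * card V"
    using assms(1) unfolding n_G_def
    by (intro Max.boundedI) (auto simp: weak_model_def finite_lists_length_eq)
qed

end
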